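(* For integers $m\ge1$ and $d\ge0$ define $$e(m,d)=2^{3-2m-d}\sum_{i=1}^{\lfloor (m+1)/2\rfloor} i\binom{2m+d+2}{m+d+2i+1}.$$ Then $e(m,d+1)<\frac{2m+d+3}{2m+2d+4}\,e(m,d)$ for all $d\ge 0$, and for each fixed $m\ge1$, $\lim_{d\to\infty}e(m,d)=0$.
   Context: $\binom{a}{b}=\frac{a!}{b!(a-b)!}$ for integers $0\le b\le a$. *)

theory Defs
  imports Complex_Main
begin

definition e :: "nat \<Rightarrow> nat \<Rightarrow> real" where
  "e m d = (2::real) powr (3 - 2 * real m - real d) *
     (\<Sum>i = 1..(m + 1) div 2. real i * real ((2*m + d + 2) choose (m + d + 2*i + 1)))"

end

theory Submission
  imports Defs
begin

text \<open>
  Pascal's rule in the form \<open>(n+1) C(n,k) = (k+1) C(n+1,k+1)\<close> shows that raising \<open>d\<close> by one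
  multiplies each binomial coefficient of \<open>e m d\<close> by \<open>(2m+d+3)/(k+1)\<close>, where
  \<open>k + 1 = m+d+2i+2 > m+d+2\<close>; together with the factor \<open>1/2\<close> from the power of two this gives
  the strict ratio bound. For \<open>d \<ge> m\<close> that ratio is at most \<open>3/4\<close>, so \<open>e m\<close> tends to zero
  by the ratio test.
\<close>

lemma binomial_Suc_Suc_scaled_less:
  assumes "a < Suc k" and "k \<le> n"
  shows "a * (Suc n choose Suc k) < Suc n * (n choose k)"
proof -
  have "0 < Suc n choose Suc k" using assms(2) by (simp add: zero_less_binomial_iff)
  then have "a * (Suc n choose Suc k) < Suc k * (Suc n choose Suc k)"
    using assms(1) by (intro mult_strict_right_mono)
  also have "\<dots> = Suc n * (n choose k)"
    by (metis Suc_times_binomial_eq mult.commute)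
  finally show ?thesis .
qed

lemma tendsto_zero_of_eventual_ratio_bound:
  fixes f :: "nat \<Rightarrow> real"
  assumes nonneg: "\<And>n. 0 \<le> f n" and "c < 1"
    and ratio: "\<And>n. n \<ge> N \<Longrightarrow> f (Suc n) \<le> c * f n"
  shows "f \<longlonglongrightarrow> 0"
proof -
  have "summable f"
    by (rule summable_ratio_test[OF \<open>c < 1\<close>, of N]) (use ratio nonneg in auto)
  then show ?thesis by (rule summable_LIMSEQ_zero)
qed

definition e_sum :: "nat \<Rightarrow> nat \<Rightarrow> real" where
  "e_sum m d = (\<Sum>i = 1..(m + 1) div 2. real i * real ((2*m + d + 2) choose (m + d + 2*i + 1)))"

lemma e_eq_e_sum: "e m d = 2 powr (3 - 2 * real m - real d) * e_sum m d"
  unfolding e_def e_sum_def ..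

lemma e_sum_nonneg: "0 \<le> e_sum m d"
  unfolding e_sum_def by (intro sum_nonneg) auto

lemma e_nonneg: "0 \<le> e m d"
  unfolding e_eq_e_sum using e_sum_nonneg by simp

lemma e_sum_Suc_less:
  assumes "m \<ge> 1"
  shows "real (m + d + 2) * e_sum m (Suc d) < real (2*m + d + 3) * e_sum m d"
proof -
  have term_less: "real (m + d + 2) * real ((2*m + Suc d + 2) choose (m + Suc d + 2*i + 1))
      < real (2*m + d + 3) * real ((2*m + d + 2) choose (m + d + 2*i + 1))"
    if "i \<in> {1..(m + 1) div 2}" for i
  proof -
    have "(m + d + 2) * (Suc (2*m + d + 2) choose Suc (m + d + 2*i + 1))
        < Suc (2*m + d + 2) * ((2*m + d + 2) choose (m + d + 2*i + 1))"
      using that by (intro binomial_Suc_Suc_scaled_less) auto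
    moreover have "2*m + Suc d + 2 = Suc (2*m + d + 2)" "m + Suc d + 2*i + 1 = Suc (m + d + 2*i + 1)"
      "2*m + d + 3 = Suc (2*m + d + 2)"
      by simp_all
    ultimately show ?thesis by (simp only: of_nat_mult [symmetric] of_nat_less_iff)
  qed
  have "(\<Sum>i = 1..(m + 1) div 2. real i *
          (real (m + d + 2) * real ((2*m + Suc d + 2) choose (m + Suc d + 2*i + 1))))
      < (\<Sum>i = 1..(m + 1) div 2. real i *
          (real (2*m + d + 3) * real ((2*m + d + 2) choose (m + d + 2*i + 1))))"
    using assms term_less by (intro sum_strict_mono mult_strict_left_mono) auto
  then show ?thesis
    unfolding e_sum_def sum_distrib_left by (simp add: algebra_simps)
qed

lemma e_Suc_less:
  assumes "m \<ge> 1"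
  shows "e m (Suc d) < real (2*m + d + 3) / real (2*m + 2*d + 4) * e m d"
proof -
  define x :: real where "x = 2 powr (2 - 2 * real m - real d)"
  have "x > 0" by (simp add: x_def)
  have e_Suc: "e m (Suc d) = x * e_sum m (Suc d)"
    by (simp add: e_eq_e_sum x_def algebra_simps)
  have "(2::real) powr (3 - 2 * real m - real d) = 2 powr (2 - 2 * real m - real d + 1)"
    by (simp add: algebra_simps)
  also have "\<dots> = x * 2"
    unfolding x_def by (subst powr_add) simp
  finally have "e m d = x * 2 * e_sum m d"
    unfolding e_eq_e_sum by simp
  moreover have "real (2*m + 2*d + 4) = 2 * real (m + d + 2)" by simp
  moreover have "x * (real (m + d + 2) * e_sum m (Suc d)) < x * (real (2*m + d + 3) * e_sum m d)"
    using e_sum_Suc_less[OF assms] \<open>x > 0\<close> by simp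
  ultimately show ?thesis unfolding e_Suc by (simp add: field_simps)
qed

theorem mainTheorem11:
  fixes m :: nat
  assumes "m \<ge> 1"
  shows "(\<forall>d. e m (d + 1) < (real (2*m + d + 3) / real (2*m + 2*d + 4)) * e m d)
         \<and> (\<lambda>d. e m d) \<longlonglongrightarrow> 0"
proof
  show "\<forall>d. e m (d + 1) < (real (2*m + d + 3) / real (2*m + 2*d + 4)) * e m d"
    using e_Suc_less[OF assms] by simp
  show "(\<lambda>d. e m d) \<longlonglongrightarrow> 0"
  proof (rule tendsto_zero_of_eventual_ratio_bound[of _ "3/4" m])
    fix d assume "d \<ge> m"
    then have "real (2*m + d + 3) / real (2*m + 2*d + 4) \<le> 3/4"
      by (simp add: divide_simps)
    then show "e m (Suc d) \<le> 3/4 * e m d"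
      using e_Suc_less[OF assms, of d] e_nonneg[of m d] by (smt (verit) mult_right_mono)
  qed (simp_all add: e_nonneg)
qed

end
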